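(* Let $L$ be an $R_0$-algebra, $k\in[0,1)$, and $F$ a fated filter of $L$. Let $t_1\in[\tfrac{1-k}{2},1]$ and $t_2\in(0,\tfrac{1-k}{2})$, and define $\mu:L\to[0,1]$ by $\mu(x)=t_1$ if $x\in F$ and $\mu(x)=t_2$ otherwise. Then $\mu$ is an $(\in,\in\vee q_k)$-fuzzy fated filter of $L$.
   Context: An $R_0$-algebra is a bounded distributive lattice $(L,\wedge,\vee,0,1)$ with an order-reversing involution $\neg$ and a binary operation $\to$ such that for all $x,y,z\in L$: $x\to y=\neg y\to\neg x$; $1\to x=x$; $(y\to z)\wedge((x\to y)\to(x\to z))=y\to z$; $x\to(y\to z)=y\to(x\to z)$; $x\to(y\vee z)=(x\to y)\vee(x\to z)$; $(x\to y)\vee((x\to y)\to(\neg x\vee y))=1$. A fated filter of $L$ is a nonempty subset $A\subseteq L$ with $1\in A$ such that for all $x,y\in L$ and $a\in A$, $a\to((x\to y)\to x)\in A$ implies $x\in A$. For $x\in L$, $t\in(0,1]$ and a fuzzy subset $\mu$: $x_t\in\mu$ iff $\mu(x)\ge t$; $x_t\,q_k\,\mu$ iff $\mu(x)+t+k>1$; $x_t\in\vee q_k\,\mu$ iff $x_t\in\mu$ or $x_t\,q_k\,\mu$. $\mu$ is an $(\in,\in\vee q_k)$-fuzzy fated filter of $L$ if (1) for all $x\in L$, $t\in(0,1]$: $x_t\in\mu\Rightarrow 1_t\in\vee q_k\,\mu$; and (2) for all $x,a,y\in L$, $t,s\in(0,1]$: if $(a\to((x\to y)\to x))_t\in\mu$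 and $a_s\in\mu$ then $x_{\min\{t,s\}}\in\vee q_k\,\mu$. *)

theory Defs
  imports Main "HOL.Real"
begin

definition R0_algebra :: "('a::{distrib_lattice,bounded_lattice} \<Rightarrow> 'a) \<Rightarrow> ('a \<Rightarrow> 'a \<Rightarrow> 'a) \<Rightarrow> bool" where
  "R0_algebra neg imp \<longleftrightarrow>
     (\<forall>x. neg (neg x) = x) \<and>
     (\<forall>x y. x \<le> y \<longrightarrow> neg y \<le> neg x) \<and>
     (\<forall>x y. imp x y = imp (neg y) (neg x)) \<and>
     (\<forall>x. imp top x = x) \<and>
     (\<forall>x y z. inf (imp y z) (imp (imp x y) (imp x z)) = imp y z) \<and>
     (\<forall>x y z. imp x (imp y z) = imp y (imp x z)) \<and>
     (\<forall>x y z. imp x (sup y z) = sup (imp x y) (imp x z)) \<and>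
     (\<forall>x y. sup (imp x y) (imp (imp x y) (sup (neg x) y)) = top)"

definition fated_filter :: "('a \<Rightarrow> 'a \<Rightarrow> 'a) \<Rightarrow> 'a::bounded_lattice set \<Rightarrow> bool" where
  "fated_filter imp A \<longleftrightarrow> A \<noteq> {} \<and> top \<in> A \<and>
     (\<forall>x y a. a \<in> A \<longrightarrow> imp a (imp (imp x y) x) \<in> A \<longrightarrow> x \<in> A)"

definition fz_in :: "'a \<Rightarrow> real \<Rightarrow> ('a \<Rightarrow> real) \<Rightarrow> bool" where
  "fz_in x t \<mu> \<longleftrightarrow> \<mu> x \<ge> t"

definition fz_q :: "real \<Rightarrow> 'a \<Rightarrow> real \<Rightarrow> ('a \<Rightarrow> real) \<Rightarrow> bool" where
  "fz_q k x t \<mu> \<longleftrightarrow> \<mu> x + t + k > 1"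

definition fz_in_or_q :: "real \<Rightarrow> 'a \<Rightarrow> real \<Rightarrow> ('a \<Rightarrow> real) \<Rightarrow> bool" where
  "fz_in_or_q k x t \<mu> \<longleftrightarrow> fz_in x t \<mu> \<or> fz_q k x t \<mu>"

definition fuzzy_subset :: "('a \<Rightarrow> real) \<Rightarrow> bool" where
  "fuzzy_subset \<mu> \<longleftrightarrow> (\<forall>x. 0 \<le> \<mu> x \<and> \<mu> x \<le> 1)"

definition in_inq_fuzzy_fated_filter ::
  "real \<Rightarrow> ('a::bounded_lattice \<Rightarrow> 'a \<Rightarrow> 'a) \<Rightarrow> ('a \<Rightarrow> real) \<Rightarrow> bool" where
  "in_inq_fuzzy_fated_filter k imp \<mu> \<longleftrightarrow> fuzzy_subset \<mu> \<and>
     (\<forall>x t. 0 < t \<and> t \<le> 1 \<longrightarrow> fz_in x t \<mu> \<longrightarrow> fz_in_or_q k top t \<mu>) \<and>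
     (\<forall>x a y t s. 0 < t \<and> t \<le> 1 \<and> 0 < s \<and> s \<le> 1 \<longrightarrow>
        fz_in (imp a (imp (imp x y) x)) t \<mu> \<longrightarrow> fz_in a s \<mu> \<longrightarrow>
        fz_in_or_q k x (min t s) \<mu>)"

end

theory Submission
  imports Defs
begin

text \<open>The two-valued function is already a fuzzy fated filter in the ordinary sense
  (every level set is \<open>F\<close> or the whole algebra), and such a filter is an
  \<open>(\<in>,\<in>\<or>q\<^sub>k)\<close>-fuzzy fated filter for every \<open>k\<close>.\<close>

definition fuzzy_fated_filter :: "('a::bounded_lattice \<Rightarrow> 'a \<Rightarrow> 'a) \<Rightarrow> ('a \<Rightarrow> real) \<Rightarrow> bool" where
  "fuzzy_fated_filter imp \<mu> \<longleftrightarrow> fuzzy_subset \<mu> \<and> (\<forall>x. \<mu> x \<le> \<mu> top) \<and>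
     (\<forall>x a y. min (\<mu> (imp a (imp (imp x y) x))) (\<mu> a) \<le> \<mu> x)"

lemma fuzzy_fated_filter_imp_in_inq_fuzzy_fated_filter:
  assumes "fuzzy_fated_filter imp \<mu>"
  shows "in_inq_fuzzy_fated_filter k imp \<mu>"
proof -
  have top: "fz_in top t \<mu>" if "fz_in x t \<mu>" for x t
    using assms that unfolding fuzzy_fated_filter_def fz_in_def by (meson order_trans)
  have mp: "fz_in x (min t s) \<mu>"
    if "fz_in (imp a (imp (imp x y) x)) t \<mu>" and "fz_in a s \<mu>" for x a y t s
  proof -
    have "min t s \<le> min (\<mu> (imp a (imp (imp x y) x))) (\<mu> a)"
      using that unfolding fz_in_def by (simp add: min.coboundedI1 min.coboundedI2)
    also have "\<dots> \<le> \<mu> x"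
      using assms unfolding fuzzy_fated_filter_def by blast
    finally show ?thesis unfolding fz_in_def .
  qed
  show ?thesis
    using assms top mp
    unfolding in_inq_fuzzy_fated_filter_def fuzzy_fated_filter_def fz_in_or_q_def by blast
qed

lemma fuzzy_fated_filter_two_valued:
  assumes "fated_filter imp F" and "0 \<le> t\<^sub>2" and "t\<^sub>2 \<le> t\<^sub>1" and "t\<^sub>1 \<le> 1"
  shows "fuzzy_fated_filter imp (\<lambda>x. if x \<in> F then t\<^sub>1 else t\<^sub>2)"
proof -
  let ?\<mu> = "\<lambda>x. if x \<in> F then t\<^sub>1 else t\<^sub>2"
  have "top \<in> F" and closed: "\<And>x y a. a \<in> F \<Longrightarrow> imp a (imp (imp x y) x) \<in> F \<Longrightarrow> x \<in> F"
    using assms(1) unfolding fated_filter_def by blast+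
  have "fuzzy_subset ?\<mu>"
    using assms(2-4) unfolding fuzzy_subset_def by simp
  moreover have "?\<mu> x \<le> ?\<mu> top" for x
    using \<open>top \<in> F\<close> assms(3) by simp
  moreover have "min (?\<mu> (imp a (imp (imp x y) x))) (?\<mu> a) \<le> ?\<mu> x" for x a y
  proof (cases "x \<in> F")
    case True
    then show ?thesis using assms(3) by (simp add: min_le_iff_disj)
  next
    case False
    then have "a \<notin> F \<or> imp a (imp (imp x y) x) \<notin> F" using closed by blast
    with False show ?thesis by (auto simp: min_le_iff_disj)
  qed
  ultimately show ?thesis
    unfolding fuzzy_fated_filter_def by blast
qed

theorem theorem3p18:
  fixes neg :: "'a::{distrib_lattice,bounded_lattice} \<Rightarrow> 'a"
    and imp :: "'a \<Rightarrow> 'a \<Rightarrow> 'a"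
    and F :: "'a set" and k t1 t2 :: real
  assumes "R0_algebra neg imp"
    and "0 \<le> k" and "k < 1"
    and "fated_filter imp F"
    and "(1 - k) / 2 \<le> t1" and "t1 \<le> 1"
    and "0 < t2" and "t2 < (1 - k) / 2"
  shows "in_inq_fuzzy_fated_filter k imp (\<lambda>x. if x \<in> F then t1 else t2)"
proof -
  have "t2 \<le> t1" using assms(5,8) by linarith
  with assms(4,6,7) have "fuzzy_fated_filter imp (\<lambda>x. if x \<in> F then t1 else t2)"
    by (simp add: fuzzy_fated_filter_two_valued)
  then show ?thesis
    by (rule fuzzy_fated_filter_imp_in_inq_fuzzy_fated_filter)
qed

end
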